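(* Let $d_{\mathcal X}$ be a metric on $\mathcal X$, $Q$ a probability measure on $\mathcal Z$, and $P_{Z|X}$ a Markov kernel with $P_{Z|X}(\cdot|x)\ll Q$ for all $x$. If $P_{Z|X}$ satisfies $\varepsilon\cdot d_{\mathcal X}$-privacy, then for every $\alpha>1$ the PPR-compressed mechanism $x\mapsto((Z_i)_{i\ge1},K)$ satisfies $2\alpha\varepsilon\cdot d_{\mathcal X}$-privacy.
   Context: A Markov kernel $P_{W|X}$ satisfies $\varepsilon\cdot d_{\mathcal X}$-privacy if $\Pr(W\in S\mid X=x)\le e^{\varepsilon d_{\mathcal X}(x,x')}\Pr(W\in S\mid X=x')$ for all $x,x'\in\mathcal X$ and measurable $S$. PPR: let $Z_1,Z_2,\ldots$ be i.i.d. $\sim Q$, independent of the points $T_1\le T_2\le\cdots$ of a rate-$1$ Poisson process on $[0,\infty)$. For input $x$, with $P=P_{Z|X}(\cdot|x)$, set $\tilde T_i:=T_i(\frac{\mathrm dP}{\mathrm dQ}(Z_i))^{-1}$ ($:=\infty$ if the derivative is $0$, $\infty^{-\alpha}:=0$), and draw $K$ with $\Pr(K=k\mid (Z_i,T_i)_i)=\tilde T_k^{-\alpha}/\sum_i\tilde T_i^{-\alpha}$ (fresh randomness for each input). The PPR-compressed mechanism is the kernel $x\mapsto((Z_i)_{i\ge1},K)$; the shared sequence $(Z_i)$ does not depend on $x$. *)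

theory Defs
  imports "HOL-Probability.Probability"
begin

definition is_metric :: "('x \<Rightarrow> 'x \<Rightarrow> real) \<Rightarrow> bool" where
  "is_metric d \<longleftrightarrow> (\<forall>x y. d x y = 0 \<longleftrightarrow> x = y) \<and> (\<forall>x y. d x y = d y x)
      \<and> (\<forall>x y z. d x z \<le> d x y + d y z)"

definition metric_private :: "('x \<Rightarrow> 'y measure) \<Rightarrow> real \<Rightarrow> ('x \<Rightarrow> 'x \<Rightarrow> real) \<Rightarrow> bool" where
  "metric_private M eps d \<longleftrightarrow>
     (\<forall>x x'. \<forall>S \<in> sets (M x).
        emeasure (M x) S \<le> ennreal (exp (eps * d x x')) * emeasure (M x') S)"

text \<open>Exponential(1) distribution; the rate-1 Poisson process points are the
  partial sums of i.i.d. Exp(1) variables.\<close>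
definition exp1 :: "real measure" where
  "exp1 = density lborel (exponential_density 1)"

definition arrival :: "(nat \<Rightarrow> real) \<Rightarrow> nat \<Rightarrow> real" where
  "arrival e i = (\<Sum>j\<le>i. e j)"

definition ppr_base :: "'z measure \<Rightarrow> ((nat \<Rightarrow> 'z) \<times> (nat \<Rightarrow> real)) measure" where
  "ppr_base Q = (\<Pi>\<^sub>M i\<in>UNIV. Q) \<Otimes>\<^sub>M (\<Pi>\<^sub>M i\<in>UNIV. exp1)"

text \<open>Weight tilde T_k ^ (-alpha) = (r(Z_k) / T_k) ^ alpha, with r = dP/dQ
  (r = 0 gives weight 0, r = infinity gives tilde T = 0 hence weight infinity).\<close>
definition ppr_weight :: "real \<Rightarrow> ('z \<Rightarrow> ennreal) \<Rightarrow> (nat \<Rightarrow> 'z) \<Rightarrow> (nat \<Rightarrow> real) \<Rightarrow> nat \<Rightarrow> ennreal" where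
  "ppr_weight \<alpha> r z e k =
     (if r (z k) = \<infinity> then \<infinity>
      else ennreal ((enn2real (r (z k)) / arrival e k) powr \<alpha>))"

text \<open>Output law of ((Z_i)_i, K) for the input distribution P = P_{Z|X}(.|x):
  the joint law of (shared randomness, K) has density w_k / (sum_i w_i)
  w.r.t. base \<otimes> counting measure, pushed forward to ((Z_i)_i, K).\<close>
definition ppr_mech :: "real \<Rightarrow> 'z measure \<Rightarrow> 'z measure \<Rightarrow> ((nat \<Rightarrow> 'z) \<times> nat) measure" where
  "ppr_mech \<alpha> Q P =
     distr
       (density (ppr_base Q \<Otimes>\<^sub>M count_space UNIV)
          (\<lambda>((z, e), k). ppr_weight \<alpha> (RN_deriv Q P) z e k /
                          (\<Sum>i. ppr_weight \<alpha> (RN_deriv Q P) z e i)))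
       ((\<Pi>\<^sub>M i\<in>UNIV. Q) \<Otimes>\<^sub>M count_space UNIV)
       (\<lambda>((z, e), k). (z, k))"

end

(*
  Metric privacy of P_{Z|X} against the reference measure Q says that the densities
  r_x = dP_x/dQ satisfy r_x <= c r_x' Q-a.e. with c = exp (eps d(x,x')), and by symmetry of d
  also r_x' <= c r_x.  Each PPR weight (r_x(Z_k) / T_k)^alpha therefore changes by at most the
  factor c^alpha, and the selection probability w_k / (sum_i w_i) by at most c^(2 alpha): once
  through the numerator and once through the normalising sum.  The joint law of the shared
  randomness and K has this selection probability as density with respect to a base measure
  that does not depend on x, so the almost-everywhere bound on densities passes to every event
  of the output ((Z_i)_i, K).
*)
theory Submission
  imports Defs
begin

lemma AE_pair_measureI:
  assumes "sigma_finite_measure M2" and "AE x in M1. P x" and "AE y in M2. R y"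
  shows "AE w in M1 \<Otimes>\<^sub>M M2. P (fst w) \<and> R (snd w)"
proof -
  interpret M2: sigma_finite_measure M2 by fact
  obtain N1 where N1: "{x \<in> space M1. \<not> P x} \<subseteq> N1" "N1 \<in> null_sets M1"
    using assms(2) by (auto elim!: AE_E)
  obtain N2 where N2: "{y \<in> space M2. \<not> R y} \<subseteq> N2" "N2 \<in> null_sets M2"
    using assms(3) by (auto elim!: AE_E)
  have "N1 \<times> space M2 \<union> space M1 \<times> N2 \<in> null_sets (M1 \<Otimes>\<^sub>M M2)"
    using N1(2) N2(2) by auto
  then show ?thesis
    by (rule AE_I') (use N1(1) N2(1) in \<open>auto simp: space_pair_measure\<close>)
qed

lemma AE_PiM_all_components:
  assumes "prob_space M" and "AE x in M. P x"
  shows "AE z in \<Pi>\<^sub>M (i::'i::countable)\<in>UNIV. M. \<forall>i. P (z i)"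
  using assms by (simp add: AE_all_countable AE_PiM_component)

lemma AE_le_of_set_nn_integral_le:
  assumes borel: "f \<in> borel_measurable M" "g \<in> borel_measurable M"
    and fin: "integral\<^sup>N M g \<noteq> \<infinity>"
    and le: "\<And>A. A \<in> sets M \<Longrightarrow> (\<integral>\<^sup>+ x. f x * indicator A x \<partial>M) \<le> (\<integral>\<^sup>+ x. g x * indicator A x \<partial>M)"
  shows "AE x in M. f x \<le> g x"
proof -
  let ?P = "\<lambda>f A. \<integral>\<^sup>+ x. f x * indicator A x \<partial>M"
  let ?N = "{x\<in>space M. g x < f x}"
  have N: "?N \<in> sets M" using borel by simp
  have "?P g ?N \<le> integral\<^sup>N M g"
    by (intro nn_integral_mono) (auto split: split_indicator)
  then have Pg_fin: "?P g ?N \<noteq> \<infinity>" using fin by (auto simp: top_unique)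
  have "?P (\<lambda>x. f x - g x) ?N = (\<integral>\<^sup>+x. f x * indicator ?N x - g x * indicator ?N x \<partial>M)"
    by (auto intro!: nn_integral_cong simp: indicator_def)
  also have "\<dots> = ?P f ?N - ?P g ?N"
    using borel N Pg_fin by (intro nn_integral_diff) (auto split: split_indicator)
  also have "\<dots> = 0"
    using le[OF N] Pg_fin by (intro diff_eq_0_ennreal) (auto simp: less_top[symmetric] top_unique)
  finally show ?thesis
    using borel N nn_integral_PInf_AE[OF borel(2) fin]
    by (subst (asm) nn_integral_0_iff_AE)
       (auto split: split_indicator simp: not_less ennreal_minus_eq_0)
qed

lemma (in sigma_finite_measure) AE_RN_deriv_le:
  assumes sets: "sets N1 = sets M" "sets N2 = sets M"
    and ac: "absolutely_continuous M N1" "absolutely_continuous M N2"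
    and fin: "finite_measure N2"
    and le: "\<And>A. A \<in> sets M \<Longrightarrow> emeasure N1 A \<le> ennreal c * emeasure N2 A"
  shows "AE x in M. RN_deriv M N1 x \<le> ennreal c * RN_deriv M N2 x"
proof (rule AE_le_of_set_nn_integral_le)
  have emeasure_eq: "emeasure N A = (\<integral>\<^sup>+ x. RN_deriv M N x * indicator A x \<partial>M)"
    if "absolutely_continuous M N" "sets N = sets M" "A \<in> sets M" for N A
    using emeasure_density[of "RN_deriv M N" M A] density_RN_deriv[OF that(1,2)] that(3) by simp
  have "integral\<^sup>N M (\<lambda>x. ennreal c * RN_deriv M N2 x) = ennreal c * emeasure N2 (space M)"
    using emeasure_eq[OF ac(2) sets(2) sets.top] by (simp add: nn_integral_cmult)
  also have "\<dots> \<noteq> \<infinity>"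
    using finite_measure.emeasure_finite[OF fin] sets_eq_imp_space_eq[OF sets(2)]
    by (simp add: ennreal_mult_eq_top_iff)
  finally show "integral\<^sup>N M (\<lambda>x. ennreal c * RN_deriv M N2 x) \<noteq> \<infinity>" .
  fix A assume A: "A \<in> sets M"
  have "(\<integral>\<^sup>+ x. RN_deriv M N1 x * indicator A x \<partial>M) = emeasure N1 A"
    using emeasure_eq[OF ac(1) sets(1) A] ..
  also have "\<dots> \<le> ennreal c * emeasure N2 A"
    using le[OF A] .
  also have "\<dots> = (\<integral>\<^sup>+ x. ennreal c * RN_deriv M N2 x * indicator A x \<partial>M)"
    using emeasure_eq[OF ac(2) sets(2) A] A by (simp add: nn_integral_cmult mult.assoc)
  finally show "(\<integral>\<^sup>+ x. RN_deriv M N1 x * indicator A x \<partial>M)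
      \<le> (\<integral>\<^sup>+ x. ennreal c * RN_deriv M N2 x * indicator A x \<partial>M)" .
qed auto

lemma emeasure_distr_density_le:
  assumes "f \<in> borel_measurable M" and "g \<in> borel_measurable M" and "h \<in> measurable M N"
    and "AE x in M. f x \<le> C * g x" and "A \<in> sets N"
  shows "emeasure (distr (density M f) N h) A \<le> C * emeasure (distr (density M g) N h) A"
proof -
  have "emeasure (distr (density M f) N h) A = (\<integral>\<^sup>+ x. f x * indicator (h -` A \<inter> space M) x \<partial>M)"
    using assms by (simp add: emeasure_distr emeasure_density)
  also have "\<dots> \<le> (\<integral>\<^sup>+ x. C * (g x * indicator (h -` A \<inter> space M) x) \<partial>M)"
    using assms(4) by (intro nn_integral_mono_AE) (auto split: split_indicator)
  also have "\<dots> = C * emeasure (distr (density M g) N h) A"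
    using assms by (simp add: nn_integral_cmult emeasure_distr emeasure_density)
  finally show ?thesis .
qed

lemma ennreal_inverse_antimono: "a \<le> b \<Longrightarrow> inverse b \<le> inverse (a::ennreal)"
  by (simp add: ereal_inverse_antimono inverse_ennreal.rep_eq less_eq_ennreal.rep_eq)

lemma normalized_le_of_mutually_bounded:
  fixes u v :: "nat \<Rightarrow> ennreal"
  assumes uv: "\<And>i. u i \<le> ennreal K * v i" and vu: "\<And>i. v i \<le> ennreal K * u i" and "K > 0"
  shows "u k / (\<Sum>i. u i) \<le> ennreal (K\<^sup>2) * (v k / (\<Sum>i. v i))"
proof -
  have K_inverse: "ennreal K * inverse (ennreal K) = 1"
    using \<open>K > 0\<close> by (simp add: inverse_ennreal ennreal_mult''[symmetric])
  have "(\<Sum>i. v i) \<le> ennreal K * (\<Sum>i. u i)"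
    using suminf_le[of v "\<lambda>i. ennreal K * u i"] vu by simp
  then have "inverse (ennreal K) * inverse (\<Sum>i. u i) \<le> inverse (\<Sum>i. v i)"
    using \<open>K > 0\<close> by (subst ennreal_inverse_mult'[symmetric]) (auto intro: ennreal_inverse_antimono)
  then have inv: "inverse (\<Sum>i. u i) \<le> ennreal K * inverse (\<Sum>i. v i)"
    by (metis K_inverse mult.assoc mult_1 mult_left_mono zero_le)
  have "u k / (\<Sum>i. u i) \<le> ennreal K * v k * inverse (\<Sum>i. u i)"
    using uv[of k] by (simp add: divide_ennreal_def mult_right_mono)
  also have "\<dots> \<le> ennreal K * v k * (ennreal K * inverse (\<Sum>i. v i))"
    using inv by (intro mult_left_mono) auto
  also have "\<dots> = ennreal (K\<^sup>2) * (v k / (\<Sum>i. v i))"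
    using \<open>K > 0\<close> by (simp add: divide_ennreal_def power2_eq_square ennreal_mult'' ac_simps)
  finally show ?thesis .
qed

lemma AE_RN_deriv_le_of_metric_private:
  assumes "sigma_finite_measure Q" and "metric_private P \<epsilon> d"
    and "\<And>x. sets (P x) = sets Q" and "\<And>x. absolutely_continuous Q (P x)"
    and "\<And>x. finite_measure (P x)"
  shows "AE z in Q. RN_deriv Q (P x) z \<le> ennreal (exp (\<epsilon> * d x x')) * RN_deriv Q (P x') z"
proof (rule sigma_finite_measure.AE_RN_deriv_le)
  show "emeasure (P x) A \<le> ennreal (exp (\<epsilon> * d x x')) * emeasure (P x') A" if "A \<in> sets Q" for A
    using assms(2,3) that by (auto simp: metric_private_def)
qed (use assms in auto)

lemma ppr_weight_le:
  assumes "r (z k) \<le> ennreal c * r' (z k)" and "c > 0" and "arrival e k \<ge> 0" and "\<alpha> > 0"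
  shows "ppr_weight \<alpha> r z e k \<le> ennreal (c powr \<alpha>) * ppr_weight \<alpha> r' z e k"
proof (cases "r' (z k) = \<infinity>")
  case True
  then show ?thesis using \<open>c > 0\<close> by (simp add: ppr_weight_def ennreal_mult_top)
next
  case False
  then have "r (z k) \<noteq> \<infinity>"
    using assms(1) by (auto simp: top_unique ennreal_mult_eq_top_iff)
  define a b where "a = enn2real (r (z k))" and "b = enn2real (r' (z k))"
  have ab: "0 \<le> a" "0 \<le> b" "r (z k) = ennreal a" "r' (z k) = ennreal b"
    using False \<open>r (z k) \<noteq> \<infinity>\<close> by (auto simp: a_def b_def less_top)
  then have "a \<le> c * b"
    using assms(1,2) by (simp add: ennreal_mult''[symmetric])
  then have "(a / arrival e k) powr \<alpha> \<le> (c * b / arrival e k) powr \<alpha>"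
    using ab assms(3,4) by (intro powr_mono2) (auto simp: divide_right_mono)
  also have "\<dots> = c powr \<alpha> * (b / arrival e k) powr \<alpha>"
    using ab assms(2,3) by (simp add: powr_mult[symmetric])
  finally show ?thesis
    using ab False \<open>r (z k) \<noteq> \<infinity>\<close> assms(2)
    by (simp add: ppr_weight_def a_def[symmetric] b_def[symmetric] ennreal_mult''[symmetric])
qed

lemma sets_exp1 [measurable_cong]: "sets exp1 = sets borel"
  by (simp add: exp1_def)

lemma prob_space_exp1: "prob_space exp1"
  unfolding exp1_def by (rule prob_space_exponential_density) simp

lemma AE_exp1_nonneg: "AE t in exp1. 0 \<le> t"
  unfolding exp1_def
  by (subst AE_density) (auto simp: exponential_density_def)

lemma measurable_arrival [measurable]:
  "(\<lambda>e. arrival e k) \<in> borel_measurable (\<Pi>\<^sub>M i\<in>UNIV. exp1)"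
  unfolding arrival_def by measurable

lemma measurable_ppr_weight [measurable]:
  assumes [measurable]: "r \<in> borel_measurable Q"
  shows "(\<lambda>(z, e). ppr_weight \<alpha> r z e k) \<in> borel_measurable (ppr_base Q)"
proof -
  have [measurable]: "(\<lambda>z. r (z k)) \<in> borel_measurable (\<Pi>\<^sub>M i\<in>UNIV. Q)"
    by measurable
  show ?thesis
    unfolding ppr_weight_def ppr_base_def by measurable
qed

lemma measurable_ppr_output [measurable]:
  "(\<lambda>((z, e), k). (z, k)) \<in> ppr_base Q \<Otimes>\<^sub>M count_space UNIV \<rightarrow>\<^sub>M (\<Pi>\<^sub>M i\<in>UNIV. Q) \<Otimes>\<^sub>M count_space UNIV"
  unfolding ppr_base_def by (simp add: split_beta') measurable

definition ppr_density :: "real \<Rightarrow> ('z \<Rightarrow> ennreal) \<Rightarrow> ((nat \<Rightarrow> 'z) \<times> (nat \<Rightarrow> real)) \<times> nat \<Rightarrow> ennreal"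
  where "ppr_density \<alpha> r = (\<lambda>((z, e), k). ppr_weight \<alpha> r z e k / (\<Sum>i. ppr_weight \<alpha> r z e i))"

lemma ppr_mech_eq_distr_density:
  "ppr_mech \<alpha> Q P =
     distr (density (ppr_base Q \<Otimes>\<^sub>M count_space UNIV) (ppr_density \<alpha> (RN_deriv Q P)))
       ((\<Pi>\<^sub>M i\<in>UNIV. Q) \<Otimes>\<^sub>M count_space UNIV) (\<lambda>((z, e), k). (z, k))"
  unfolding ppr_mech_def ppr_density_def ..

lemma measurable_ppr_density [measurable]:
  assumes "r \<in> borel_measurable Q"
  shows "ppr_density \<alpha> r \<in> borel_measurable (ppr_base Q \<Otimes>\<^sub>M count_space UNIV)"
proof -
  have [measurable]: "(\<lambda>w. ppr_weight \<alpha> r (fst w) (snd w) k) \<in> borel_measurable (ppr_base Q)" for k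
    using measurable_ppr_weight[OF assms, of \<alpha> k] by (simp add: split_beta')
  show ?thesis
    using measurable_compose_countable'[where I=UNIV and g=snd and N=borel
        and M="ppr_base Q \<Otimes>\<^sub>M count_space UNIV"
        and f="\<lambda>k w. ppr_weight \<alpha> r (fst (fst w)) (snd (fst w)) k /
                      (\<Sum>i. ppr_weight \<alpha> r (fst (fst w)) (snd (fst w)) i)"]
    by (simp add: ppr_density_def split_beta')
qed

lemma ppr_density_le:
  assumes "\<forall>i. r (z i) \<le> ennreal c * r' (z i) \<and> r' (z i) \<le> ennreal c * r (z i)"
    and "\<forall>j. 0 \<le> e j" and "c > 0" and "\<alpha> > 0"
  shows "ppr_density \<alpha> r ((z, e), k) \<le> ennreal ((c powr \<alpha>)\<^sup>2) * ppr_density \<alpha> r' ((z, e), k)"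
proof -
  have "0 \<le> arrival e i" for i
    using assms(2) by (simp add: arrival_def sum_nonneg)
  then show ?thesis
    unfolding ppr_density_def using assms
    by (simp add: normalized_le_of_mutually_bounded ppr_weight_le)
qed

lemma AE_ppr_density_le:
  assumes "prob_space Q" and "AE z in Q. r z \<le> ennreal c * r' z \<and> r' z \<le> ennreal c * r z"
    and "c > 0" and "\<alpha> > 0"
  shows "AE w in ppr_base Q \<Otimes>\<^sub>M count_space UNIV.
           ppr_density \<alpha> r w \<le> ennreal ((c powr \<alpha>)\<^sup>2) * ppr_density \<alpha> r' w"
proof -
  have "AE z in \<Pi>\<^sub>M (i::nat)\<in>UNIV. Q. \<forall>i. r (z i) \<le> ennreal c * r' (z i) \<and> r' (z i) \<le> ennreal c * r (z i)"
    using AE_PiM_all_components[OF assms(1,2)] .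
  moreover have "AE e in \<Pi>\<^sub>M (i::nat)\<in>UNIV. exp1. \<forall>j. 0 \<le> e j"
    using AE_PiM_all_components[OF prob_space_exp1 AE_exp1_nonneg] .
  ultimately have "AE w in ppr_base Q.
      (\<forall>i. r (fst w i) \<le> ennreal c * r' (fst w i) \<and> r' (fst w i) \<le> ennreal c * r (fst w i))
      \<and> (\<forall>j. 0 \<le> snd w j)"
    unfolding ppr_base_def using prob_space_exp1
    by (intro AE_pair_measureI prob_space_imp_sigma_finite prob_space_PiM)
  then have "AE w in ppr_base Q. \<forall>k.
      ppr_density \<alpha> r (w, k) \<le> ennreal ((c powr \<alpha>)\<^sup>2) * ppr_density \<alpha> r' (w, k)"
    by (rule AE_mp, intro AE_I2) (use assms(3,4) in \<open>auto simp: split_paired_all intro: ppr_density_le\<close>)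
  from AE_pair_measureI[OF sigma_finite_measure_count_space this, of "\<lambda>_. True"]
  show ?thesis
    by (rule AE_mp, intro AE_I2) (auto simp: split_paired_all)
qed

theorem theorem4:
  fixes d :: "'x \<Rightarrow> 'x \<Rightarrow> real"
    and Q :: "'z measure"
    and P :: "'x \<Rightarrow> 'z measure"
    and \<epsilon> \<alpha> :: real
  assumes "is_metric d"
    and "prob_space Q"
    and "\<And>x. prob_space (P x)"
    and "\<And>x. sets (P x) = sets Q"
    and "\<And>x. absolutely_continuous Q (P x)"
    and "metric_private P \<epsilon> d"
    and "\<alpha> > 1"
  shows "metric_private (\<lambda>x. ppr_mech \<alpha> Q (P x)) (2 * \<alpha> * \<epsilon>) d"
proof -
  have RN_le: "AE z in Q. RN_deriv Q (P x) z \<le> ennreal (exp (\<epsilon> * d x x')) * RN_deriv Q (P x') z"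
    for x x'
    using assms by (intro AE_RN_deriv_le_of_metric_private)
      (auto simp: prob_space_imp_sigma_finite prob_space.finite_measure)
  show ?thesis
    unfolding metric_private_def
  proof (intro allI ballI)
    fix x x' S assume S: "S \<in> sets (ppr_mech \<alpha> Q (P x))"
    let ?c = "exp (\<epsilon> * d x x')"
    have "d x' x = d x x'"
      using assms(1) by (simp add: is_metric_def)
    then have "AE z in Q. RN_deriv Q (P x) z \<le> ennreal ?c * RN_deriv Q (P x') z
                       \<and> RN_deriv Q (P x') z \<le> ennreal ?c * RN_deriv Q (P x) z"
      using RN_le[of x x'] RN_le[of x' x] by auto
    then have "AE w in ppr_base Q \<Otimes>\<^sub>M count_space UNIV.
        ppr_density \<alpha> (RN_deriv Q (P x)) w \<le> ennreal ((?c powr \<alpha>)\<^sup>2) * ppr_density \<alpha> (RN_deriv Q (P x')) w"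
      using assms(2,7) by (intro AE_ppr_density_le) auto
    moreover have "(?c powr \<alpha>)\<^sup>2 = exp (2 * \<alpha> * \<epsilon> * d x x')"
      by (simp add: powr_def power2_eq_square exp_add[symmetric])
    ultimately show "emeasure (ppr_mech \<alpha> Q (P x)) S
        \<le> ennreal (exp (2 * \<alpha> * \<epsilon> * d x x')) * emeasure (ppr_mech \<alpha> Q (P x')) S"
      using S unfolding ppr_mech_eq_distr_density
      by (intro emeasure_distr_density_le) auto
  qed
qed

end
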